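(* For all integers $m,n\ge1$ there exist a Heyting algebra $H$ and monotone polynomials $f,g:H\to H$ such that $\mu.f=f^n(\bot)$, $\mu.g=g^m(\bot)$, $\mu.(f\wedge g)=(f\wedge g)^{m+n-1}(\bot)$ and $(f\wedge g)^{m+n-2}(\bot)\neq(f\wedge g)^{m+n-1}(\bot)$.
   Context: A function $f:H\to H$ is a polynomial if there exist an IPC formula $\phi$, a variable $x$ and a valuation $v$ in $H$ of the other variables of $\phi$ such that $f(h)=[\![\phi]\!]_{(v,h/x)}$ for all $h$. $f\wedge g$ is the pointwise meet; $\mu$ denotes least fixed point. *)

theory Defs
  imports Main
begin

record 'a heyting =
  carrier :: "'a set"
  hle :: "'a \<Rightarrow> 'a \<Rightarrow> bool"
  hmeet :: "'a \<Rightarrow> 'a \<Rightarrow> 'a"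
  hjoin :: "'a \<Rightarrow> 'a \<Rightarrow> 'a"
  himp :: "'a \<Rightarrow> 'a \<Rightarrow> 'a"
  hbot :: 'a
  htop :: 'a

definition heyting_algebra :: "'a heyting \<Rightarrow> bool" where
  "heyting_algebra H \<longleftrightarrow>
     (\<forall>x\<in>carrier H. hle H x x) \<and>
     (\<forall>x\<in>carrier H. \<forall>y\<in>carrier H. hle H x y \<and> hle H y x \<longrightarrow> x = y) \<and>
     (\<forall>x\<in>carrier H. \<forall>y\<in>carrier H. \<forall>z\<in>carrier H. hle H x y \<and> hle H y z \<longrightarrow> hle H x z) \<and>
     hbot H \<in> carrier H \<and> htop H \<in> carrier H \<and>
     (\<forall>x\<in>carrier H. \<forall>y\<in>carrier H.
        hmeet H x y \<in> carrier H \<and> hjoin H x y \<in> carrier H \<and> himp H x y \<in> carrier H) \<and>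
     (\<forall>x\<in>carrier H. \<forall>y\<in>carrier H. \<forall>z\<in>carrier H.
        hle H z (hmeet H x y) \<longleftrightarrow> hle H z x \<and> hle H z y) \<and>
     (\<forall>x\<in>carrier H. \<forall>y\<in>carrier H. \<forall>z\<in>carrier H.
        hle H (hjoin H x y) z \<longleftrightarrow> hle H x z \<and> hle H y z) \<and>
     (\<forall>x\<in>carrier H. hle H (hbot H) x \<and> hle H x (htop H)) \<and>
     (\<forall>x\<in>carrier H. \<forall>y\<in>carrier H. \<forall>z\<in>carrier H.
        hle H z (himp H x y) \<longleftrightarrow> hle H (hmeet H z x) y)"

datatype ipc = PVar nat | PBot | PTop | PAnd ipc ipc | POr ipc ipc | PImp ipc ipc

fun ipc_eval :: "'a heyting \<Rightarrow> (nat \<Rightarrow> 'a) \<Rightarrow> ipc \<Rightarrow> 'a" where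
  "ipc_eval H v (PVar i) = v i"
| "ipc_eval H v PBot = hbot H"
| "ipc_eval H v PTop = htop H"
| "ipc_eval H v (PAnd a b) = hmeet H (ipc_eval H v a) (ipc_eval H v b)"
| "ipc_eval H v (POr a b) = hjoin H (ipc_eval H v a) (ipc_eval H v b)"
| "ipc_eval H v (PImp a b) = himp H (ipc_eval H v a) (ipc_eval H v b)"

definition polynomial :: "'a heyting \<Rightarrow> ('a \<Rightarrow> 'a) \<Rightarrow> bool" where
  "polynomial H f \<longleftrightarrow>
     (\<exists>\<phi> x v. (\<forall>i. v i \<in> carrier H) \<and>
        (\<forall>h\<in>carrier H. f h = ipc_eval H (v(x := h)) \<phi>))"

definition hmono :: "'a heyting \<Rightarrow> ('a \<Rightarrow> 'a) \<Rightarrow> bool" where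
  "hmono H f \<longleftrightarrow> (\<forall>a\<in>carrier H. \<forall>b\<in>carrier H. hle H a b \<longrightarrow> hle H (f a) (f b))"

definition is_lfp :: "'a heyting \<Rightarrow> ('a \<Rightarrow> 'a) \<Rightarrow> 'a \<Rightarrow> bool" where
  "is_lfp H f a \<longleftrightarrow> a \<in> carrier H \<and> f a = a \<and> (\<forall>b\<in>carrier H. f b = b \<longrightarrow> hle H a b)"

definition pmeet :: "'a heyting \<Rightarrow> ('a \<Rightarrow> 'a) \<Rightarrow> ('a \<Rightarrow> 'a) \<Rightarrow> 'a \<Rightarrow> 'a" where
  "pmeet H f g = (\<lambda>h. hmeet H (f h) (g h))"

end

theory Submission
  imports Defs
begin

text \<open>Work in the finite chain \<open>0 < 1 < \<dots> < N\<close> with \<open>N = m + n - 1\<close>. There the formula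
  \<open>(x \<rightarrow> k - 1) \<rightarrow> k\<close> denotes the map sending \<open>x < k\<close> to \<open>k\<close> and everything else to \<open>\<top>\<close>,
  and meets of such maps for \<open>k\<close> ranging over an interval \<open>[a, b)\<close> give the "ladder" that sends
  \<open>x\<close> to the least element of \<open>[a, b)\<close> above \<open>x\<close>, or to \<open>\<top>\<close> if there is none. The ladder
  \<open>f\<close> on \<open>[1, n)\<close> climbs from \<open>\<bottom>\<close> to \<open>\<top>\<close> in \<open>n\<close> steps, the ladder \<open>g\<close> on \<open>[n, N)\<close> jumps to \<open>n\<close>
  and climbs to \<open>\<top>\<close> in \<open>m\<close> steps, while their meet is the ladder on \<open>[1, N)\<close>, which needs all
  \<open>N\<close> steps.\<close>

definition chain_heyting :: "nat \<Rightarrow> nat heyting" where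
  "chain_heyting N = \<lparr>carrier = {..N}, hle = (\<le>), hmeet = min, hjoin = max,
      himp = (\<lambda>x y. if x \<le> y then N else y), hbot = 0, htop = N\<rparr>"

lemma heyting_algebra_chain_heyting: "heyting_algebra (chain_heyting N)"
  unfolding heyting_algebra_def chain_heyting_def by auto

lemma is_lfp_chain_heyting_top:
  assumes "F N = N" and "\<And>h. h \<le> N \<Longrightarrow> F h = h \<Longrightarrow> h = N"
  shows "is_lfp (chain_heyting N) F N"
  using assms by (auto simp: is_lfp_def chain_heyting_def)

lemma hmono_chain_heyting: "mono F \<Longrightarrow> hmono (chain_heyting N) F"
  by (auto simp: hmono_def chain_heyting_def mono_def)

definition ladder :: "nat \<Rightarrow> nat \<Rightarrow> nat \<Rightarrow> nat \<Rightarrow> nat" where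
  "ladder N a b h = (if max a (h + 1) < b then max a (h + 1) else N)"

lemma mono_ladder: "b \<le> N \<Longrightarrow> mono (ladder N a b)"
  by (auto simp: mono_def ladder_def)

lemma ladder_fixpoint: "ladder N a b h = h \<Longrightarrow> h = N"
  by (auto simp: ladder_def split: if_splits)

lemma min_ladder_ladder:
  "a \<le> b \<Longrightarrow> b \<le> c \<Longrightarrow> c \<le> N \<Longrightarrow> min (ladder N a b h) (ladder N b c h) = ladder N a c h"
  by (auto simp: ladder_def)

lemma funpow_ladder_bot:
  assumes "1 \<le> a" and "b \<le> N"
  shows "(ladder N a b ^^ Suc j) 0 = (if a + j < b then a + j else N)"
  by (induction j) (use assms in \<open>auto simp: ladder_def\<close>)

lemma funpow_ladder_bot_reaches_top:
  "1 \<le> a \<Longrightarrow> a \<le> b \<Longrightarrow> b \<le> N \<Longrightarrow> (ladder N a b ^^ (b - a + 1)) 0 = N"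
  using funpow_ladder_bot[of a b N "b - a"] by simp

lemma funpow_ladder_bot_below_top:
  "1 \<le> a \<Longrightarrow> a \<le> b \<Longrightarrow> b \<le> N \<Longrightarrow> j \<le> b - a \<Longrightarrow> (ladder N a b ^^ j) 0 \<noteq> N"
  by (cases j) (use funpow_ladder_bot[of a b N] in auto)

lemma is_lfp_ladder: "b \<le> N \<Longrightarrow> is_lfp (chain_heyting N) (ladder N a b) N"
  by (rule is_lfp_chain_heyting_top) (simp add: ladder_def, metis ladder_fixpoint)

text \<open>Under this valuation the variable \<open>Suc i\<close> names the constant \<open>i\<close>; variable \<open>0\<close> is the
  argument of the polynomial.\<close>

definition constant_valuation :: "nat \<Rightarrow> nat \<Rightarrow> nat" where
  "constant_valuation N i = min (i - 1) N"

definition jump_formula :: "nat \<Rightarrow> ipc" where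
  "jump_formula k = PImp (PImp (PVar 0) (PVar k)) (PVar (Suc k))"

fun ladder_formula :: "nat \<Rightarrow> nat \<Rightarrow> ipc" where
  "ladder_formula a 0 = PTop"
| "ladder_formula a (Suc b) = (if a \<le> b then PAnd (ladder_formula a b) (jump_formula b) else PTop)"

lemma eval_jump_formula:
  assumes "1 \<le> k" and "k < N" and "h \<le> N"
  shows "ipc_eval (chain_heyting N) ((constant_valuation N)(0 := h)) (jump_formula k) =
           (if h < k then k else N)"
  using assms by (auto simp: jump_formula_def chain_heyting_def constant_valuation_def)

lemma eval_ladder_formula:
  assumes "1 \<le> a" and "b \<le> N" and "h \<le> N"
  shows "ipc_eval (chain_heyting N) ((constant_valuation N)(0 := h)) (ladder_formula a b) =
           ladder N a b h"
  using assms(2)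
proof (induction b)
  case 0
  then show ?case by (simp add: chain_heyting_def ladder_def)
next
  case (Suc b)
  show ?case
  proof (cases "a \<le> b")
    case True
    have "ladder N a (Suc b) h = min (ladder N a b h) (if h < b then b else N)"
      using True Suc.prems by (auto simp: ladder_def)
    moreover have "ipc_eval (chain_heyting N) ((constant_valuation N)(0 := h)) (jump_formula b) =
        (if h < b then b else N)"
      using True Suc.prems assms by (intro eval_jump_formula) auto
    ultimately show ?thesis
      using True Suc by (simp add: chain_heyting_def del: fun_upd_apply)
  next
    case False
    then show ?thesis by (simp add: chain_heyting_def ladder_def)
  qed
qed

lemma polynomial_ladder:
  assumes "1 \<le> a" and "b \<le> N"
  shows "polynomial (chain_heyting N) (ladder N a b)"
  unfolding polynomial_def
proof (intro exI conjI)
  show "\<forall>i. constant_valuation N i \<in> carrier (chain_heyting N)"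
    by (simp add: constant_valuation_def chain_heyting_def)
  show "\<forall>h\<in>carrier (chain_heyting N).
          ladder N a b h = ipc_eval (chain_heyting N) ((constant_valuation N)(0 := h)) (ladder_formula a b)"
    using assms eval_ladder_formula by (simp add: chain_heyting_def)
qed

theorem mainTheorem19:
  fixes m n :: nat
  assumes "m \<ge> 1" and "n \<ge> 1"
  shows "\<exists>(H :: nat heyting) f g.
           heyting_algebra H \<and>
           polynomial H f \<and> polynomial H g \<and> hmono H f \<and> hmono H g \<and>
           is_lfp H f ((f ^^ n) (hbot H)) \<and>
           is_lfp H g ((g ^^ m) (hbot H)) \<and>
           is_lfp H (pmeet H f g) ((pmeet H f g ^^ (m + n - 1)) (hbot H)) \<and>
           (pmeet H f g ^^ (m + n - 2)) (hbot H) \<noteq> (pmeet H f g ^^ (m + n - 1)) (hbot H)"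
proof -
  define N where "N = m + n - 1"
  define H where "H = chain_heyting N"
  define f where "f = ladder N 1 n"
  define g where "g = ladder N n N"
  have N: "n \<le> N" "1 \<le> N" "N - n + 1 = m" using assms by (simp_all add: N_def)
  have meet: "pmeet H f g = ladder N 1 N"
    using min_ladder_ladder[of 1 n N N] N assms(2)
    by (simp add: pmeet_def H_def chain_heyting_def f_def g_def fun_eq_iff)
  have bot: "hbot H = 0" by (simp add: H_def chain_heyting_def)
  have "(f ^^ n) 0 = N"
    using funpow_ladder_bot_reaches_top[of 1 n N] N assms(2) by (simp add: f_def)
  moreover have "(g ^^ m) 0 = N"
    using funpow_ladder_bot_reaches_top[of n N N] N assms(2)
    unfolding g_def N(3)[symmetric] by simp
  moreover have "(pmeet H f g ^^ N) 0 = N"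
    using funpow_ladder_bot_reaches_top[of 1 N N] N by (simp add: meet)
  moreover have "(pmeet H f g ^^ (N - 1)) 0 \<noteq> N"
    using funpow_ladder_bot_below_top[of 1 N N "N - 1"] N by (simp add: meet)
  moreover have "m + n - 2 = N - 1" "m + n - 1 = N" by (simp_all add: N_def)
  moreover have "heyting_algebra H" "polynomial H f" "polynomial H g" "hmono H f" "hmono H g"
    "is_lfp H f N" "is_lfp H g N"
    using N assms(2)
    by (simp_all add: H_def f_def g_def heyting_algebra_chain_heyting polynomial_ladder
        hmono_chain_heyting mono_ladder is_lfp_ladder)
  moreover have "is_lfp H (pmeet H f g) N"
    unfolding meet using N by (simp add: H_def is_lfp_ladder)
  ultimately show ?thesis
    by - (rule exI[of _ H], rule exI[of _ f], rule exI[of _ g], simp add: bot)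
qed

end
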